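(* For any $a,b,c$, the 1-2 model on the periodic honeycomb lattice, with signature $(0,c,b,a,a,b,c,0)$ at every vertex, is orthogonally realizable; specifically, taking on every edge the base change matrix $T=\begin{pmatrix}\cos\frac{3\pi}4&\sin\frac{3\pi}4\\-\sin\frac{3\pi}4&\cos\frac{3\pi}4\end{pmatrix}$ yields matchgate signatures satisfying the parity constraint.
   Context: Signatures are indexed by local configurations $000,001,\dots,111$ of the incident $(a,b,c)$-edges. A realization assigns to each edge an invertible $2\times2$ matrix $T_e$ and to each vertex a matchgate signature $m_v$ with $m_v=(T_a\otimes T_b\otimes T_c)r_v$ at black and $m_v=((T_a\otimes T_b\otimes T_c)^t)^{-1}r_v$ at white vertices, each $m_v$ satisfying the parity constraint (vanishing on all binary strings with an even number of $1$'s, or on all with an odd number); the model is orthogonally realizable if a realization exists with all $T_e$ orthogonal. *)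

theory Defs
  imports "HOL-Analysis.Analysis"
begin

text \<open>Local configurations of the three incident (a,b,c)-edges: an index of type
  2 \<times> 2 \<times> 2, where the element 1 of type 2 stands for bit 0 and 2 for bit 1.
  A signature is a vector in real^(2 \<times> 2 \<times> 2).\<close>

definition bit :: "2 \<Rightarrow> bool" where
  "bit i \<longleftrightarrow> i = 2"

definition bit3 :: "2 \<times> 2 \<times> 2 \<Rightarrow> bool \<times> bool \<times> bool" where
  "bit3 s = (case s of (i, j, k) \<Rightarrow> (bit i, bit j, bit k))"

definition weight :: "2 \<times> 2 \<times> 2 \<Rightarrow> nat" where
  "weight s = (case bit3 s of (x, y, z) \<Rightarrow> of_bool x + of_bool y + of_bool z)"

definition parity_ok :: "real ^ (2 \<times> 2 \<times> 2) \<Rightarrow> bool" where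
  "parity_ok m \<longleftrightarrow> (\<forall>s. even (weight s) \<longrightarrow> m $ s = 0) \<or> (\<forall>s. odd (weight s) \<longrightarrow> m $ s = 0)"

definition kron3 :: "real^2^2 \<Rightarrow> real^2^2 \<Rightarrow> real^2^2 \<Rightarrow> real ^ (2 \<times> 2 \<times> 2) ^ (2 \<times> 2 \<times> 2)" where
  "kron3 A B C = (\<chi> s t. case s of (i, j, k) \<Rightarrow> case t of (i', j', k') \<Rightarrow>
       A $ i $ i' * B $ j $ j' * C $ k $ k')"

text \<open>Periodic honeycomb lattice: black vertex at p is joined by its a-edge to the white
  vertex at p, by its b-edge to the white vertex at p + (1,0), by its c-edge to the white
  vertex at p + (0,1).  An edge is named by its black endpoint and its label.\<close>
datatype label = LA | LB | LC
datatype hvertex = Black "int \<times> int" | White "int \<times> int"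
type_synonym hedge = "(int \<times> int) \<times> label"

fun incident :: "hvertex \<Rightarrow> label \<Rightarrow> hedge" where
  "incident (Black p) l = (p, l)"
| "incident (White (x, y)) LA = ((x, y), LA)"
| "incident (White (x, y)) LB = ((x - 1, y), LB)"
| "incident (White (x, y)) LC = ((x, y - 1), LC)"

definition vertex_sig :: "(hedge \<Rightarrow> real^2^2) \<Rightarrow> (hvertex \<Rightarrow> real ^ (2 \<times> 2 \<times> 2)) \<Rightarrow> hvertex
    \<Rightarrow> real ^ (2 \<times> 2 \<times> 2)" where
  "vertex_sig T r v =
     (let K = kron3 (T (incident v LA)) (T (incident v LB)) (T (incident v LC)) in
      case v of Black _ \<Rightarrow> K *v r v
              | White _ \<Rightarrow> matrix_inv (transpose K) *v r v)"

definition is_realization :: "(hedge \<Rightarrow> real^2^2) \<Rightarrow> (hvertex \<Rightarrow> real ^ (2 \<times> 2 \<times> 2)) \<Rightarrow> bool" where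
  "is_realization T r \<longleftrightarrow> (\<forall>e. invertible (T e)) \<and> (\<forall>v. parity_ok (vertex_sig T r v))"

definition orth_realizable :: "(hvertex \<Rightarrow> real ^ (2 \<times> 2 \<times> 2)) \<Rightarrow> bool" where
  "orth_realizable r \<longleftrightarrow> (\<exists>T. is_realization T r \<and> (\<forall>e. orthogonal_matrix (T e)))"

text \<open>The signature (0,c,b,a,a,b,c,0) indexed by 000,001,...,111 (first bit = a-edge).\<close>
definition sig12 :: "real \<Rightarrow> real \<Rightarrow> real \<Rightarrow> real ^ (2 \<times> 2 \<times> 2)" where
  "sig12 a b c = (\<chi> s. case bit3 s of
      (False, False, False) \<Rightarrow> 0 | (False, False, True) \<Rightarrow> c
    | (False, True, False) \<Rightarrow> b | (False, True, True) \<Rightarrow> a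
    | (True, False, False) \<Rightarrow> a | (True, False, True) \<Rightarrow> b
    | (True, True, False) \<Rightarrow> c | (True, True, True) \<Rightarrow> 0)"

definition Tbase :: "real^2^2" where
  "Tbase = vector [vector [cos (3*pi/4), sin (3*pi/4)], vector [- sin (3*pi/4), cos (3*pi/4)]]"

end

theory Submission
  imports Defs
begin

(* If every edge carries the same orthogonal matrix T, the transformation
   ((T \<otimes> T \<otimes> T)^t)^{-1} used at white vertices equals the transformation T \<otimes> T \<otimes> T
   used at black vertices, because a Kronecker product of orthogonal matrices is
   orthogonal.  Hence every vertex signature is K *v r with K = T \<otimes> T \<otimes> T, and the
   realization question reduces to a single parity check on K *v r.

   Finally a direct computation shows that
   (Tbase \<otimes> Tbase \<otimes> Tbase) *v (0,c,b,a,a,b,c,0) vanishes on the four even-weight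
   configurations, from which the theorem follows. *)

lemma sum_configurations:
  "sum f (UNIV :: (2 \<times> 2 \<times> 2) set) =
     f (1,1,1) + f (1,1,2) + f (1,2,1) + f (1,2,2) + f (2,1,1) + f (2,1,2) + f (2,2,1) + f (2,2,2)"
proof -
  have "sum f (UNIV :: (2 \<times> 2 \<times> 2) set) = (\<Sum>i\<in>UNIV. \<Sum>jk\<in>UNIV. f (i, jk))"
    by (simp add: sum.cartesian_product)
  also have "\<dots> = (\<Sum>i\<in>UNIV. \<Sum>j\<in>UNIV. \<Sum>k\<in>UNIV. f (i, j, k))"
    by (simp add: sum.cartesian_product)
  finally show ?thesis by (simp only: sum_2 add.assoc)
qed

lemma kron3_entry: "kron3 A B C $ (i,j,k) $ (i',j',k') = A $ i $ i' * B $ j $ j' * C $ k $ k'"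
  by (simp add: kron3_def)

lemma kron3_mult: "kron3 A B C ** kron3 D E F = kron3 (A ** D) (B ** E) (C ** F)"
proof -
  have "(kron3 A B C ** kron3 D E F) $ (i,j,k) $ (i',j',k') =
        kron3 (A ** D) (B ** E) (C ** F) $ (i,j,k) $ (i',j',k')" for i j k i' j' k'
    by (simp only: matrix_matrix_mult_def vec_lambda_beta kron3_entry sum_configurations sum_2
          ring_distribs mult.assoc mult.left_commute add.assoc)
  then show ?thesis by (simp add: vec_eq_iff)
qed

lemma kron3_transpose: "transpose (kron3 A B C) = kron3 (transpose A) (transpose B) (transpose C)"
  by (simp add: vec_eq_iff transpose_def kron3_def split: prod.splits)

lemma kron3_mat1: "kron3 (mat 1) (mat 1) (mat 1) = mat 1"
  by (simp add: vec_eq_iff mat_def kron3_def split: prod.splits)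

lemma kron3_orthogonal:
  assumes "orthogonal_matrix A" "orthogonal_matrix B" "orthogonal_matrix C"
  shows "orthogonal_matrix (kron3 A B C)"
  using assms unfolding orthogonal_matrix_def
  by (simp add: kron3_transpose kron3_mult kron3_mat1)

lemma matrix_inv_unique:
  fixes A :: "'a::semiring_1^'n^'m"
  assumes "A ** B = mat 1" "B ** A = mat 1"
  shows "matrix_inv A = B"
proof -
  define X where "X = matrix_inv A"
  have "\<exists>A'. A ** A' = mat 1 \<and> A' ** A = mat 1" using assms by blast
  from someI_ex[OF this] have X: "A ** X = mat 1" "X ** A = mat 1"
    unfolding X_def matrix_inv_def by auto
  have "X = X ** (A ** B)" using assms by simp
  also have "\<dots> = (X ** A) ** B" by (simp add: matrix_mul_assoc)
  also have "\<dots> = B" using X by simp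
  finally show ?thesis unfolding X_def .
qed

lemma orthogonal_matrix_inv_transpose:
  fixes K :: "real^'n^'n"
  assumes "orthogonal_matrix K"
  shows "matrix_inv (transpose K) = K"
  using assms unfolding orthogonal_matrix_def by (intro matrix_inv_unique) auto

lemma vertex_sig_constant_orthogonal:
  assumes "orthogonal_matrix T"
  shows "vertex_sig (\<lambda>_. T) r v = kron3 T T T *v r v"
  using orthogonal_matrix_inv_transpose[OF kron3_orthogonal[OF assms assms assms]]
  by (cases v) (simp_all add: vertex_sig_def)

lemma constant_orthogonal_realization:
  assumes orth: "orthogonal_matrix T"
    and parity: "\<And>v. parity_ok (kron3 T T T *v r v)"
  shows "is_realization (\<lambda>_. T) r \<and> orth_realizable r"
proof -
  have "invertible T"
    using orth unfolding orthogonal_matrix_def invertible_def by blast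
  then have realization: "is_realization (\<lambda>_. T) r"
    unfolding is_realization_def vertex_sig_constant_orthogonal[OF orth] using parity by simp
  then have "orth_realizable r"
    unfolding orth_realizable_def using orth by blast
  with realization show ?thesis by blast
qed

lemma Tbase_entries:
  "Tbase $ 1 $ 1 = - (sqrt 2 / 2)" "Tbase $ 1 $ 2 = sqrt 2 / 2"
  "Tbase $ 2 $ 1 = - (sqrt 2 / 2)" "Tbase $ 2 $ 2 = - (sqrt 2 / 2)"
proof -
  have angle: "3 * pi / 4 = pi - pi / 4" by simp
  have "cos (3 * pi / 4) = - (sqrt 2 / 2)" "sin (3 * pi / 4) = sqrt 2 / 2"
    unfolding angle by (simp_all only: cos_diff sin_diff cos_pi sin_pi cos_45 sin_45)
  then show "Tbase $ 1 $ 1 = - (sqrt 2 / 2)" "Tbase $ 1 $ 2 = sqrt 2 / 2"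
    "Tbase $ 2 $ 1 = - (sqrt 2 / 2)" "Tbase $ 2 $ 2 = - (sqrt 2 / 2)"
    by (simp_all add: Tbase_def)
qed

text \<open>The rows (-t, t) and (-t, -t) are orthonormal because t^2 = 1/2; the square root
  itself plays no further role.\<close>
lemma Tbase_orthogonal: "orthogonal_matrix Tbase"
proof -
  have "sqrt 2 / 2 * (sqrt 2 / 2) = (1 / 2 :: real)" by simp
  then obtain t :: real where entries: "Tbase $ 1 $ 1 = - t" "Tbase $ 1 $ 2 = t"
      "Tbase $ 2 $ 1 = - t" "Tbase $ 2 $ 2 = - t" and half: "t * t = 1 / 2"
    using Tbase_entries by blast
  show ?thesis
    unfolding orthogonal_matrix
    by (simp add: vec_eq_iff matrix_matrix_mult_def transpose_def mat_def sum_2 forall_2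
        entries half)
qed

lemma bit_values: "bit 1 = False" "bit 2 = True"
  by (simp_all add: bit_def)

lemma sig12_entries:
  "sig12 a b c $ (1,1,1) = 0" "sig12 a b c $ (1,1,2) = c" "sig12 a b c $ (1,2,1) = b"
  "sig12 a b c $ (1,2,2) = a" "sig12 a b c $ (2,1,1) = a" "sig12 a b c $ (2,1,2) = b"
  "sig12 a b c $ (2,2,1) = c" "sig12 a b c $ (2,2,2) = 0"
  by (simp_all add: sig12_def bit3_def bit_values)

lemma even_weight_configurations:
  assumes "even (weight s)"
  shows "s \<in> {(1,1,1), (1,2,2), (2,1,2), (2,2,1)}"
proof -
  obtain i j k where s: "s = (i, j, k)" by (cases s) auto
  have "weight (i, j, k) = of_bool (bit i) + of_bool (bit j) + of_bool (bit k)"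
    by (simp add: weight_def bit3_def)
  then show ?thesis
    using assms exhaust_2[of i] exhaust_2[of j] exhaust_2[of k]
    by (auto simp: s bit_values)
qed

text \<open>Each entry of (Tbase \<otimes> Tbase \<otimes> Tbase) *v (0,c,b,a,a,b,c,0) is t^3 times a signed
  sum of a, b, c, where t = \<surd>2/2; on the even-weight configurations the signs make the
  a-, b- and c-contributions cancel in pairs.  Only the sign pattern of Tbase matters
  here, so t is treated as an arbitrary number.\<close>
lemma Tbase_sig12_even_zero:
  assumes "s \<in> {(1,1,1), (1,2,2), (2,1,2), (2,2,1)}"
  shows "(kron3 Tbase Tbase Tbase *v sig12 a b c) $ s = 0"
proof -
  obtain t where entries: "Tbase $ 1 $ 1 = - t" "Tbase $ 1 $ 2 = t"
      "Tbase $ 2 $ 1 = - t" "Tbase $ 2 $ 2 = - t"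
    using Tbase_entries by blast
  have entry: "(kron3 Tbase Tbase Tbase *v sig12 a b c) $ (i,j,k) =
      (\<Sum>u\<in>UNIV. kron3 Tbase Tbase Tbase $ (i,j,k) $ u * sig12 a b c $ u)" for i j k
    by (simp add: matrix_vector_mult_def)
  show ?thesis
    using assms
    by (auto simp: entry sum_configurations kron3_entry entries sig12_entries algebra_simps)
qed

lemma Tbase_sig12_parity: "parity_ok (kron3 Tbase Tbase Tbase *v sig12 a b c)"
  unfolding parity_ok_def using even_weight_configurations Tbase_sig12_even_zero by blast

theorem mainTheorem18:
  fixes a b c :: real
  shows "is_realization (\<lambda>_. Tbase) (\<lambda>_. sig12 a b c) \<and> orth_realizable (\<lambda>_. sig12 a b c)"
  using constant_orthogonal_realization[OF Tbase_orthogonal Tbase_sig12_parity] .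

end
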